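(* Let $f\colon\mathbb{F}_2^n\times\mathbb{F}_2^d\to\mathbb{F}_2^r$ be a strong, linear, lossless condenser for min-entropy $m$ with error $\epsilon$, and $g\colon\mathbb{F}_2^n\times\mathbb{F}_2^{d'}\to\mathbb{F}_2^k$ a strong, linear extractor for min-entropy $n-m$ with error $\epsilon'$. For each $u\in\mathbb{F}_2^d$ let $H_u$ be the $r\times n$ matrix with $f(x,u)=H_ux$ and let $\mathcal{C}_u:=\{x\in\mathbb{F}_2^n: H_ux=0\}$; for each $u\in\mathbb{F}_2^{d'}$ let $G_u$ be the $k\times n$ matrix of the linear map $g(\cdot,u)$ and let $\mathcal{C}'_u$ be the code with encoding map $x\mapsto xG_u$ ($x\in\mathbb{F}_2^k$). Let $S\subseteq[n]$ be a set of size at most $m$. Then all but a $5\epsilon$ fraction of the codes $\mathcal{C}_u$ ($u\in\mathbb{F}_2^d$) and all but a $5\epsilon'$ fraction of the codes $\mathcal{C}'_u$ ($u\in\mathbb{F}_2^{d'}$) can tolerate the erasure pattern defined by $S$.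
   Context: Statistical distance is half the $\ell_1$ distance; min-entropy at least $k$ means every outcome has probability at most $2^{-k}$. $f$ is a strong lossless condenser for min-entropy $m$ with error $\epsilon$ if for every distribution $\mathcal{X}$ on $\mathbb{F}_2^n$ with min-entropy at least $m$, $X\sim\mathcal{X}$ and independent uniform $U$ on $\mathbb{F}_2^d$, $(U,f(X,U))$ is within statistical distance $\epsilon$ of a distribution of the form $(\mathcal{U}_d,\mathcal{Z})$ with min-entropy at least $d+m$; it is linear if $f(\cdot,u)$ is linear for every $u$. $g$ is a strong extractor for min-entropy $n-m$ with error $\epsilon'$ if for every such $\mathcal{X}$ with min-entropy at least $n-m$ and independent uniform $U$, $(U,g(X,U))$ is within statistical distance $\epsilon'$ of uniform on $\mathbb{F}_2^{d'+k}$; linear means $g(\cdot,u)$ is linear for each $u$. A linear code given as a kernel $\mathcal{C}_u$ tolerates the erasure pattern $S$ if no two distinct codewords agree on all coordinates outside $S$; the code $\mathcal{C}'_u$ tolerates $S$ if the map sending $x\in\mathbb{F}_2^k$ to the restriction of $xG_u$ to the coordinates in $[n]\setminus S$ is injective. *)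

theory Defs
  imports "HOL-Probability.Probability"
begin

text \<open>Vectors in F_2^n are boolean lists of length n; addition is pointwise xor.
  Coordinates are indexed 0..n-1 (so [n] is {0..<n}).\<close>

definition vecs :: "nat \<Rightarrow> bool list set" where
  "vecs n = {x. length x = n}"

definition vadd :: "bool list \<Rightarrow> bool list \<Rightarrow> bool list" where
  "vadd x y = map2 (\<noteq>) x y"

definition zero_vec :: "nat \<Rightarrow> bool list" where
  "zero_vec n = replicate n False"

definition unit_vec :: "nat \<Rightarrow> nat \<Rightarrow> bool list" where
  "unit_vec n j = map (\<lambda>i. i = j) [0..<n]"

definition stat_dist :: "'a pmf \<Rightarrow> 'a pmf \<Rightarrow> real" where
  "stat_dist P Q = (\<Sum>\<^sub>\<infinity>x. \<bar>pmf P x - pmf Q x\<bar>) / 2"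

definition min_entropy_ge :: "'a pmf \<Rightarrow> real \<Rightarrow> bool" where
  "min_entropy_ge P k \<longleftrightarrow> (\<forall>x. pmf P x \<le> 2 powr (- k))"

definition unif :: "nat \<Rightarrow> bool list pmf" where
  "unif d = pmf_of_set (vecs d)"

definition seeded_out ::
  "(bool list \<Rightarrow> bool list \<Rightarrow> bool list) \<Rightarrow> nat \<Rightarrow> bool list pmf \<Rightarrow> (bool list \<times> bool list) pmf" where
  "seeded_out f d X = map_pmf (\<lambda>(x, u). (u, f x u)) (pair_pmf X (unif d))"

definition is_source :: "nat \<Rightarrow> real \<Rightarrow> bool list pmf \<Rightarrow> bool" where
  "is_source n k X \<longleftrightarrow> set_pmf X \<subseteq> vecs n \<and> min_entropy_ge X k"

definition linear_seeded :: "nat \<Rightarrow> nat \<Rightarrow> nat \<Rightarrow> (bool list \<Rightarrow> bool list \<Rightarrow> bool list) \<Rightarrow> bool" where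
  "linear_seeded n d r f \<longleftrightarrow>
     (\<forall>u\<in>vecs d. (\<forall>x\<in>vecs n. f x u \<in> vecs r) \<and>
        (\<forall>x\<in>vecs n. \<forall>y\<in>vecs n. f (vadd x y) u = vadd (f x u) (f y u)))"

definition strong_lossless_condenser ::
  "nat \<Rightarrow> nat \<Rightarrow> nat \<Rightarrow> (bool list \<Rightarrow> bool list \<Rightarrow> bool list) \<Rightarrow> real \<Rightarrow> real \<Rightarrow> bool" where
  "strong_lossless_condenser n d r f m eps \<longleftrightarrow>
     (\<forall>X. is_source n m X \<longrightarrow>
        (\<exists>Z :: (bool list \<times> bool list) pmf.
            set_pmf Z \<subseteq> vecs d \<times> vecs r \<and>
            map_pmf fst Z = unif d \<and>
            min_entropy_ge Z (real d + m) \<and>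
            stat_dist (seeded_out f d X) Z \<le> eps))"

definition strong_extractor ::
  "nat \<Rightarrow> nat \<Rightarrow> nat \<Rightarrow> (bool list \<Rightarrow> bool list \<Rightarrow> bool list) \<Rightarrow> real \<Rightarrow> real \<Rightarrow> bool" where
  "strong_extractor n d k g mm eps \<longleftrightarrow>
     (\<forall>X. is_source n mm X \<longrightarrow>
        stat_dist (seeded_out g d X) (pmf_of_set (vecs d \<times> vecs k)) \<le> eps)"

definition kernel_code :: "nat \<Rightarrow> nat \<Rightarrow> (bool list \<Rightarrow> bool list \<Rightarrow> bool list) \<Rightarrow> bool list \<Rightarrow> bool list set" where
  "kernel_code n r f u = {x \<in> vecs n. f x u = zero_vec r}"

definition agree_outside :: "nat \<Rightarrow> nat set \<Rightarrow> bool list \<Rightarrow> bool list \<Rightarrow> bool" where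
  "agree_outside n S x y \<longleftrightarrow> (\<forall>i<n. i \<notin> S \<longrightarrow> x ! i = y ! i)"

definition kernel_tolerates :: "nat \<Rightarrow> bool list set \<Rightarrow> nat set \<Rightarrow> bool" where
  "kernel_tolerates n C S \<longleftrightarrow>
     (\<forall>x\<in>C. \<forall>y\<in>C. x \<noteq> y \<longrightarrow> \<not> agree_outside n S x y)"

text \<open>G_u: the k x n matrix of the linear map g(.,u); entry (i,j) is the i-th
  coordinate of g(e_j,u).  Encoding x \<mapsto> x G_u for x in F_2^k.\<close>
definition gen_matrix :: "nat \<Rightarrow> (bool list \<Rightarrow> bool list \<Rightarrow> bool list) \<Rightarrow> bool list \<Rightarrow> nat \<Rightarrow> nat \<Rightarrow> bool" where
  "gen_matrix n g u i j = g (unit_vec n j) u ! i"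

definition encode :: "nat \<Rightarrow> nat \<Rightarrow> (bool list \<Rightarrow> bool list \<Rightarrow> bool list) \<Rightarrow> bool list \<Rightarrow> bool list \<Rightarrow> bool list" where
  "encode n k g u x =
     map (\<lambda>j. odd (card {i. i < k \<and> x ! i \<and> gen_matrix n g u i j})) [0..<n]"

definition restrict_outside :: "nat \<Rightarrow> nat set \<Rightarrow> bool list \<Rightarrow> bool list" where
  "restrict_outside n S y = map (\<lambda>j. y ! j) (filter (\<lambda>j. j \<notin> S) [0..<n])"

definition gen_tolerates :: "nat \<Rightarrow> nat \<Rightarrow> (bool list \<Rightarrow> bool list \<Rightarrow> bool list) \<Rightarrow> bool list \<Rightarrow> nat set \<Rightarrow> bool" where
  "gen_tolerates n k g u S \<longleftrightarrow> inj_on (\<lambda>x. restrict_outside n S (encode n k g u x)) (vecs k)"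

end

theory Submission
  imports Defs
begin

text \<open>A bad seed is witnessed by a set \<open>E\<close> of output pairs that the seeded output hits with
  noticeably larger probability than any high min-entropy (or uniform) distribution can.
  For the condenser, take a source of min-entropy \<open>m\<close> putting mass \<open>2^(\<lfloor>m\<rfloor> - m) \<ge> 1/2\<close>
  uniformly on the \<open>2^\<lfloor>m\<rfloor>\<close> vectors supported on some \<open>T \<supseteq> S\<close> with \<open>|T| = \<lfloor>m\<rfloor>\<close>: for a bad
  seed \<open>u\<close> some nonzero codeword of \<open>\<C>\<^sub>u\<close> is supported in \<open>S\<close>, so \<open>H\<^sub>u\<close> maps these vectors onto at
  most half as many outputs, and the output distribution on this image cannot be matched by a
  distribution of min-entropy \<open>d + m\<close>.
  For the extractor, take the uniform source on the vectors supported outside \<open>S\<close>, of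
  min-entropy \<open>n - |S| \<ge> n - m\<close>: for a bad seed two distinct messages have encodings agreeing
  outside \<open>S\<close>, so their difference \<open>z \<noteq> 0\<close> is orthogonal to every column \<open>G\<^sub>u e\<^sub>j\<close> with
  \<open>j \<notin> S\<close>, and the image of the source lies in the hyperplane \<open>z\<^sup>\<perp>\<close>, half of \<open>\<bool>\<^sub>2\<^sup>k\<close>.
  A union over the bad seeds gives the bounds \<open>4\<epsilon>\<close> and \<open>2\<epsilon>'\<close>.\<close>

section \<open>Vectors over \<open>\<bool>\<^sub>2\<close>\<close>

lemma vecs_eq_lists_length: "vecs n = {xs. set xs \<subseteq> (UNIV :: bool set) \<and> length xs = n}"
  by (auto simp: vecs_def)

lemma finite_vecs [simp]: "finite (vecs n)"
  unfolding vecs_eq_lists_length by (rule finite_lists_length_eq) simp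

lemma card_vecs: "card (vecs n) = 2 ^ n"
  unfolding vecs_eq_lists_length by (subst card_lists_length_eq) (simp_all add: card_UNIV_bool)

lemma zero_vec_in_vecs [simp]: "zero_vec n \<in> vecs n"
  by (simp add: zero_vec_def vecs_def)

lemma unit_vec_in_vecs [simp]: "unit_vec n j \<in> vecs n"
  by (simp add: unit_vec_def vecs_def)

lemma length_unit_vec [simp]: "length (unit_vec n j) = n"
  by (simp add: unit_vec_def)

lemma vecs_not_empty [simp]: "vecs n \<noteq> {}"
  using zero_vec_in_vecs by blast

lemma length_vadd [simp]: "length (vadd x y) = min (length x) (length y)"
  by (simp add: vadd_def)

lemma nth_vadd [simp]: "i < length x \<Longrightarrow> i < length y \<Longrightarrow> vadd x y ! i = (x ! i \<noteq> y ! i)"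
  by (simp add: vadd_def)

lemma vadd_in_vecs [simp]: "x \<in> vecs n \<Longrightarrow> y \<in> vecs n \<Longrightarrow> vadd x y \<in> vecs n"
  by (simp add: vecs_def vadd_def)

lemma vadd_zero_vec: "x \<in> vecs n \<Longrightarrow> vadd x (zero_vec n) = x"
  by (intro nth_equalityI) (auto simp: vecs_def zero_vec_def vadd_def)

lemma vadd_self: "x \<in> vecs n \<Longrightarrow> vadd x x = zero_vec n"
  by (intro nth_equalityI) (auto simp: vecs_def zero_vec_def vadd_def)

lemma vadd_vadd_cancel: "x \<in> vecs n \<Longrightarrow> e \<in> vecs n \<Longrightarrow> vadd (vadd x e) e = x"
  by (intro nth_equalityI) (auto simp: vecs_def vadd_def)

lemma nonzero_coordinate_vadd:
  assumes "x \<in> vecs n" "y \<in> vecs n" "x \<noteq> y"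
  obtains i where "i < n" "vadd x y ! i"
  using assms nth_equalityI[of x y] by (auto simp: vecs_def)

lemma linear_seeded_in_vecs:
  "linear_seeded n d r f \<Longrightarrow> u \<in> vecs d \<Longrightarrow> x \<in> vecs n \<Longrightarrow> f x u \<in> vecs r"
  by (simp add: linear_seeded_def)

lemma linear_seeded_vadd:
  "linear_seeded n d r f \<Longrightarrow> u \<in> vecs d \<Longrightarrow> x \<in> vecs n \<Longrightarrow> y \<in> vecs n \<Longrightarrow>
    f (vadd x y) u = vadd (f x u) (f y u)"
  by (simp add: linear_seeded_def)

lemma linear_seeded_zero_vec:
  assumes "linear_seeded n d r f" "u \<in> vecs d"
  shows "f (zero_vec n) u = zero_vec r"
proof -
  have "f (zero_vec n) u = f (vadd (zero_vec n) (zero_vec n)) u"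
    by (simp add: vadd_self[OF zero_vec_in_vecs])
  also have "\<dots> = vadd (f (zero_vec n) u) (f (zero_vec n) u)"
    by (simp add: linear_seeded_vadd[OF assms])
  also have "\<dots> = zero_vec r"
    by (rule vadd_self[OF linear_seeded_in_vecs[OF assms zero_vec_in_vecs]])
  finally show ?thesis .
qed

definition supp_vecs :: "nat \<Rightarrow> nat set \<Rightarrow> bool list set" where
  "supp_vecs n A = {x \<in> vecs n. \<forall>i<n. x ! i \<longrightarrow> i \<in> A}"

definition indicator_vec :: "nat \<Rightarrow> nat set \<Rightarrow> bool list" where
  "indicator_vec n A = map (\<lambda>i. i \<in> A) [0..<n]"

lemma supp_vecs_subset_vecs: "supp_vecs n A \<subseteq> vecs n"
  by (auto simp: supp_vecs_def)

lemma finite_supp_vecs [simp]: "finite (supp_vecs n A)"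
  using finite_subset[OF supp_vecs_subset_vecs] by simp

lemma zero_vec_in_supp_vecs [simp]: "zero_vec n \<in> supp_vecs n A"
  by (simp add: supp_vecs_def zero_vec_def vecs_def)

lemma supp_vecs_mono: "A \<subseteq> B \<Longrightarrow> supp_vecs n A \<subseteq> supp_vecs n B"
  by (auto simp: supp_vecs_def)

lemma vadd_in_supp_vecs:
  "x \<in> supp_vecs n A \<Longrightarrow> y \<in> supp_vecs n A \<Longrightarrow> vadd x y \<in> supp_vecs n A"
  by (auto simp: supp_vecs_def vecs_def)

lemma indicator_vec_of_vec: "x \<in> vecs n \<Longrightarrow> indicator_vec n {i. i < n \<and> x ! i} = x"
  by (intro nth_equalityI) (auto simp: indicator_vec_def vecs_def)

lemma card_supp_vecs:
  assumes "A \<subseteq> {..<n}"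
  shows "card (supp_vecs n A) = 2 ^ card A"
proof -
  have "inj_on (indicator_vec n) (Pow A)"
  proof (rule inj_onI)
    fix B C assume "B \<in> Pow A" "C \<in> Pow A" and eq: "indicator_vec n B = indicator_vec n C"
    have "i \<in> B \<longleftrightarrow> i \<in> C" if "i < n" for i
      using arg_cong[OF eq, of "\<lambda>x. x ! i"] that by (simp add: indicator_vec_def)
    with \<open>B \<in> Pow A\<close> \<open>C \<in> Pow A\<close> assms show "B = C" by blast
  qed
  moreover have "supp_vecs n A = indicator_vec n ` Pow A"
  proof
    show "supp_vecs n A \<subseteq> indicator_vec n ` Pow A"
    proof
      fix x assume x: "x \<in> supp_vecs n A"
      then have "x = indicator_vec n {i. i < n \<and> x ! i}"
        by (simp add: indicator_vec_of_vec supp_vecs_def)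
      moreover have "{i. i < n \<and> x ! i} \<in> Pow A" using x by (auto simp: supp_vecs_def)
      ultimately show "x \<in> indicator_vec n ` Pow A" by blast
    qed
  qed (auto simp: indicator_vec_def supp_vecs_def vecs_def)
  ultimately show ?thesis
    using card_Pow[of A] finite_subset[OF assms] by (simp add: card_image)
qed

lemma double_card_le_if_inj_into_complement:
  assumes "finite V" "h ` {x \<in> V. P x} \<subseteq> {x \<in> V. \<not> P x}" "inj_on h {x \<in> V. P x}"
  shows "2 * card {x \<in> V. P x} \<le> card V"
proof -
  have "card {x \<in> V. P x} \<le> card {x \<in> V. \<not> P x}"
    using card_inj_on_le[OF assms(3,2)] assms(1) by simp
  moreover have "card V = card {x \<in> V. P x} + card {x \<in> V. \<not> P x}"
    using assms(1) by (subst card_Un_disjoint[symmetric]) (auto intro: arg_cong[where f = card])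
  ultimately show ?thesis by simp
qed

lemma double_card_image_le_if_periodic:
  assumes V: "V \<subseteq> vecs n" "finite V" and e: "e \<in> vecs n" "i < n" "e ! i"
    and closed: "\<And>v. v \<in> V \<Longrightarrow> vadd v e \<in> V"
    and periodic: "\<And>v. v \<in> V \<Longrightarrow> h (vadd v e) = h v"
  shows "2 * card (h ` V) \<le> card V"
proof -
  let ?V0 = "{v \<in> V. \<not> v ! i}"
  have "h ` V \<subseteq> h ` ?V0"
  proof
    fix w assume "w \<in> h ` V"
    then obtain v where v: "v \<in> V" "w = h v" by blast
    show "w \<in> h ` ?V0"
    proof (cases "v ! i")
      case True
      have "v \<in> vecs n" using v V by blast
      then have "\<not> vadd v e ! i" using True e by (simp add: vecs_def)
      then have "vadd v e \<in> ?V0" using closed[OF v(1)] by simp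
      then show ?thesis using v periodic by (metis image_eqI)
    qed (use v in blast)
  qed
  then have "card (h ` V) \<le> card (h ` ?V0)"
    using V(2) by (intro card_mono) auto
  also have "\<dots> \<le> card ?V0"
    using V(2) by (intro card_image_le) auto
  finally have "card (h ` V) \<le> card ?V0" .
  moreover have "2 * card ?V0 \<le> card V"
  proof (rule double_card_le_if_inj_into_complement[OF V(2)])
    show "(\<lambda>v. vadd v e) ` ?V0 \<subseteq> {v \<in> V. \<not> \<not> v ! i}"
    proof
      fix w assume "w \<in> (\<lambda>v. vadd v e) ` ?V0"
      then obtain v where v: "v \<in> V" "\<not> v ! i" and w: "w = vadd v e" by blast
      have "v \<in> vecs n" using v V by blast
      then have "w ! i" using v w e by (simp add: vecs_def)
      then show "w \<in> {v \<in> V. \<not> \<not> v ! i}" using closed[OF v(1)] w by simp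
    qed
    show "inj_on (\<lambda>v. vadd v e) ?V0"
    proof (rule inj_onI)
      fix v w assume "v \<in> ?V0" "w \<in> ?V0" and "vadd v e = vadd w e"
      then show "v = w" using V e vadd_vadd_cancel by (metis (no_types, lifting) mem_Collect_eq subsetD)
    qed
  qed
  ultimately show ?thesis by simp
qed

section \<open>Statistical distance and sources\<close>

lemma sum_pmf_eq_one:
  assumes "finite D" "set_pmf P \<subseteq> D"
  shows "sum (pmf P) D = 1"
proof -
  have "measure P D = 1"
    using assms by (simp add: measure_pmf.prob_eq_1 AE_measure_pmf_iff subset_iff)
  then show ?thesis using measure_measure_pmf_finite[OF assms(1)] by simp
qed

lemma measure_diff_le_stat_dist:
  assumes D: "finite D" "set_pmf P \<subseteq> D" "set_pmf Q \<subseteq> D" and E: "E \<subseteq> D"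
  shows "measure P E - measure Q E \<le> stat_dist P Q"
proof -
  let ?\<delta> = "\<lambda>x. \<bar>pmf P x - pmf Q x\<bar>"
  have "(\<Sum>\<^sub>\<infinity>x. ?\<delta> x) = (\<Sum>\<^sub>\<infinity>x\<in>D. ?\<delta> x)"
  proof (rule infsum_cong_neutral)
    fix x assume "x \<in> UNIV - D"
    then have "x \<notin> set_pmf P" "x \<notin> set_pmf Q" using D by auto
    then show "?\<delta> x = 0" by (simp add: set_pmf_iff)
  qed auto
  then have total: "(\<Sum>\<^sub>\<infinity>x. ?\<delta> x) = sum ?\<delta> E + sum ?\<delta> (D - E)"
    using D(1) E by (simp add: infsum_finite sum.subset_diff[of E D])
  have split: "sum (pmf R) D = sum (pmf R) E + sum (pmf R) (D - E)" for R
    using D(1) E by (simp add: sum.subset_diff[of E D])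
  have in_E: "measure P E - measure Q E = (\<Sum>x\<in>E. pmf P x - pmf Q x)"
    using D(1) E by (simp add: measure_measure_pmf_finite finite_subset sum_subtractf)
  also have "\<dots> = (\<Sum>x\<in>D - E. pmf Q x - pmf P x)"
    using split[of P] split[of Q] sum_pmf_eq_one[OF D(1,2)] sum_pmf_eq_one[OF D(1,3)]
    by (simp add: sum_subtractf)
  finally have "2 * (measure P E - measure Q E)
      = (\<Sum>x\<in>E. pmf P x - pmf Q x) + (\<Sum>x\<in>D - E. pmf Q x - pmf P x)"
    using in_E by simp
  also have "\<dots> \<le> sum ?\<delta> E + sum ?\<delta> (D - E)"
    by (intro add_mono sum_mono) auto
  finally show ?thesis unfolding stat_dist_def total by simp
qed

lemma measure_le_card_times_bound:
  assumes "finite E" "\<And>x. pmf Q x \<le> c"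
  shows "measure Q E \<le> real (card E) * c"
proof -
  have "measure Q E = sum (pmf Q) E" using assms by (simp add: measure_measure_pmf_finite)
  also have "\<dots> \<le> sum (\<lambda>_. c) E" by (intro sum_mono assms(2))
  finally show ?thesis by simp
qed

lemma measure_seeded_out_Sigma_ge:
  fixes X :: "bool list pmf"
  assumes "finite V" "B \<subseteq> vecs d" "\<And>u x. u \<in> B \<Longrightarrow> x \<in> V \<Longrightarrow> f x u \<in> F u"
  shows "measure X V * (real (card B) / 2 ^ d) \<le> measure (seeded_out f d X) (Sigma B F)"
proof -
  have "measure X V * (real (card B) / 2 ^ d) = measure (pair_pmf X (unif d)) (V \<times> B)"
    using assms(1,2) finite_subset[OF assms(2)]
    by (simp add: measure_pmf_prob_product countable_finite unif_def measure_pmf_of_set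
        card_vecs Int_absorb1)
  also have "\<dots> \<le> measure (pair_pmf X (unif d)) ((\<lambda>(x, u). (u, f x u)) -` Sigma B F)"
    using assms(3) by (intro measure_pmf.finite_measure_mono) auto
  also have "\<dots> = measure (seeded_out f d X) (Sigma B F)"
    by (simp add: seeded_out_def measure_map_pmf)
  finally show ?thesis .
qed

text \<open>On the pairs \<open>(u, f(x,u))\<close> with \<open>u \<in> B\<close> and \<open>x \<in> V\<close> the seeded output has mass
  at least \<open>P[X \<in> V] |B| / 2^d\<close>, whereas \<open>Q\<close> has mass at most \<open>|B| M c\<close> there.\<close>

lemma stat_dist_seeded_out_ge:
  fixes X :: "bool list pmf"
  assumes lin: "linear_seeded n d r f" and X: "set_pmf X \<subseteq> vecs n"
    and Q: "set_pmf Q \<subseteq> vecs d \<times> vecs r" and Q_le: "\<And>z. pmf Q z \<le> c"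
    and B: "B \<subseteq> vecs d" and V: "V \<subseteq> vecs n"
    and small: "\<And>u. u \<in> B \<Longrightarrow> real (card ((\<lambda>x. f x u) ` V)) \<le> M"
  shows "real (card B) * (measure X V / 2 ^ d - M * c) \<le> stat_dist (seeded_out f d X) Q"
proof -
  define E where "E = Sigma B (\<lambda>u. (\<lambda>x. f x u) ` V)"
  have E_sub: "E \<subseteq> vecs d \<times> vecs r"
    using B V lin by (auto simp: E_def linear_seeded_def)
  have finite_V: "finite V" using finite_subset[OF V] by simp
  have "0 \<le> c" using order_trans[OF pmf_nonneg Q_le] .
  have "real (card E) = (\<Sum>u\<in>B. real (card ((\<lambda>x. f x u) ` V)))"
    unfolding E_def using finite_subset[OF B] finite_V by (simp add: card_SigmaI)
  also have "\<dots> \<le> real (card B) * M"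
    using sum_mono[of B _ "\<lambda>_. M"] small by simp
  finally have "real (card E) * c \<le> real (card B) * M * c"
    using \<open>0 \<le> c\<close> by (rule mult_right_mono)
  then have "measure Q E \<le> real (card B) * M * c"
    using measure_le_card_times_bound[OF finite_subset[OF E_sub] Q_le] by simp
  moreover have "measure X V * (real (card B) / 2 ^ d) \<le> measure (seeded_out f d X) E"
    unfolding E_def using finite_V B by (intro measure_seeded_out_Sigma_ge) auto
  moreover have "set_pmf (seeded_out f d X) \<subseteq> vecs d \<times> vecs r"
    using lin X by (auto simp: seeded_out_def unif_def linear_seeded_def)
  then have "measure (seeded_out f d X) E - measure Q E \<le> stat_dist (seeded_out f d X) Q"
    using measure_diff_le_stat_dist[OF _ _ Q E_sub] by simp
  ultimately show ?thesis by (simp add: algebra_simps)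
qed

lemma is_source_pmf_of_set:
  assumes "A \<subseteq> vecs n" "A \<noteq> {}" "2 powr k \<le> real (card A)"
  shows "is_source n k (pmf_of_set A)"
proof -
  have finite_A: "finite A" using finite_subset[OF assms(1)] by simp
  have "pmf (pmf_of_set A) x \<le> 2 powr (- k)" for x
  proof -
    have "pmf (pmf_of_set A) x \<le> 1 / real (card A)"
      using finite_A assms(2) by (simp add: indicator_def)
    also have "\<dots> \<le> 1 / 2 powr k"
      using assms(2,3) finite_A by (intro divide_left_mono mult_pos_pos) (auto simp: card_gt_0_iff)
    finally show ?thesis by (simp add: powr_minus_divide)
  qed
  then show ?thesis
    using assms finite_A by (simp add: is_source_def min_entropy_ge_def)
qed

text \<open>Weight \<open>|V| 2^-m\<close> spread uniformly on \<open>V\<close> and the remaining weight uniformly on the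
  complement of \<open>V\<close>; the complement is large enough because \<open>m \<le> n\<close>.\<close>

lemma mixture_source_exists:
  assumes V: "V \<subseteq> vecs n" "V \<noteq> {}" and card_V: "real (card V) \<le> 2 powr m"
    and m_le: "m \<le> real n"
  shows "\<exists>X. is_source n m X \<and> real (card V) * 2 powr (- m) \<le> measure X V"
proof (cases "vecs n - V = {}")
  case True
  then have "V = vecs n" using V by blast
  then have "2 powr m \<le> real (card V)"
    using m_le by (simp add: card_vecs powr_realpow[symmetric])
  then have "is_source n m (pmf_of_set V)" by (rule is_source_pmf_of_set[OF V])
  moreover have "real (card V) * 2 powr (- m) \<le> 1"
    using card_V by (simp add: powr_minus field_simps)
  ultimately show ?thesis
    using V finite_subset[OF V(1)] by (intro exI[of _ "pmf_of_set V"]) (simp add: measure_pmf_of_set)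
next
  case False
  define W where "W = vecs n - V"
  define \<alpha> where "\<alpha> = real (card V) * 2 powr (- m)"
  define X where "X = bind_pmf (bernoulli_pmf \<alpha>) (\<lambda>b. pmf_of_set (if b then V else W))"
  have finite: "finite V" "finite W" using finite_subset[OF V(1)] by (auto simp: W_def)
  have card_pos: "0 < real (card V)" "0 < real (card W)"
    using finite V(2) False by (auto simp: W_def card_gt_0_iff)
  have \<alpha>: "0 \<le> \<alpha>" "\<alpha> \<le> 1"
    using card_V by (auto simp: \<alpha>_def powr_minus field_simps)
  have pmf_X: "pmf X x = \<alpha> * indicator V x / real (card V) + (1 - \<alpha>) * indicator W x / real (card W)"
    for x
    unfolding X_def pmf_bind using \<alpha> finite V(2) False by (simp add: W_def mult_ac)
  have "set_pmf X \<subseteq> vecs n"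
    unfolding X_def using V finite False by (auto simp: W_def split: if_splits)
  moreover have "pmf X x \<le> 2 powr (- m)" for x
  proof -
    have "(1 - \<alpha>) = (2 powr m - real (card V)) * 2 powr (- m)"
      by (simp add: \<alpha>_def algebra_simps powr_minus)
    also have "\<dots> \<le> real (card W) * 2 powr (- m)"
    proof -
      have "real (card W) = 2 ^ n - real (card V)"
        using V(1) finite(1) card_mono[OF finite_vecs V(1)]
        by (simp add: W_def card_Diff_subset card_vecs of_nat_diff)
      moreover have "2 powr m \<le> 2 ^ n"
        using m_le by (simp add: powr_realpow[symmetric])
      ultimately show ?thesis by (intro mult_right_mono) auto
    qed
    finally have "(1 - \<alpha>) / real (card W) \<le> 2 powr (- m)"
      using card_pos by (simp add: pos_divide_le_eq mult.commute)
    moreover have "\<alpha> / real (card V) = 2 powr (- m)"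
      using card_pos by (simp add: \<alpha>_def)
    ultimately show ?thesis
      using pmf_X[of x] \<alpha> by (cases "x \<in> V"; cases "x \<in> W") (auto simp: W_def)
  qed
  moreover have "measure X V = \<alpha>"
  proof -
    have "measure X V = (\<Sum>x\<in>V. \<alpha> / real (card V))"
      using finite pmf_X by (simp add: measure_measure_pmf_finite W_def)
    then show ?thesis using card_pos by simp
  qed
  ultimately show ?thesis
    by (intro exI[of _ X]) (simp add: is_source_def min_entropy_ge_def \<alpha>_def)
qed

section \<open>Erasures in the kernel codes of a condenser\<close>

lemma not_kernel_tolerates_obtains_codeword:
  assumes lin: "linear_seeded n d r f" and u: "u \<in> vecs d"
    and bad: "\<not> kernel_tolerates n (kernel_code n r f u) S"
  obtains e i where "e \<in> supp_vecs n S" "i < n" "e ! i" "f e u = zero_vec r"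
proof -
  obtain x y where x: "x \<in> vecs n" "f x u = zero_vec r" and y: "y \<in> vecs n" "f y u = zero_vec r"
    and "x \<noteq> y" and agree: "agree_outside n S x y"
    using bad unfolding kernel_tolerates_def kernel_code_def by blast
  have "vadd x y \<in> supp_vecs n S"
    using x y agree by (auto simp: supp_vecs_def agree_outside_def vecs_def)
  moreover obtain i where "i < n" "vadd x y ! i"
    using nonzero_coordinate_vadd[OF x(1) y(1) \<open>x \<noteq> y\<close>] .
  moreover have "f (vadd x y) u = zero_vec r"
    using x y linear_seeded_vadd[OF lin u] vadd_self[OF zero_vec_in_vecs] by simp
  ultimately show thesis by (rule that)
qed

lemma double_card_image_supp_vecs_le_if_not_kernel_tolerates:
  assumes lin: "linear_seeded n d r f" and u: "u \<in> vecs d"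
    and "S \<subseteq> T" and "T \<subseteq> {..<n}"
    and bad: "\<not> kernel_tolerates n (kernel_code n r f u) S"
  shows "2 * card ((\<lambda>x. f x u) ` supp_vecs n T) \<le> 2 ^ card T"
proof -
  obtain e i where e: "e \<in> supp_vecs n S" "i < n" "e ! i" and fe: "f e u = zero_vec r"
    using not_kernel_tolerates_obtains_codeword[OF lin u bad] .
  have e_T: "e \<in> supp_vecs n T" using e supp_vecs_mono[OF \<open>S \<subseteq> T\<close>] by blast
  have "2 * card ((\<lambda>x. f x u) ` supp_vecs n T) \<le> card (supp_vecs n T)"
  proof (rule double_card_image_le_if_periodic[OF supp_vecs_subset_vecs finite_supp_vecs])
    show "e \<in> vecs n" using e_T supp_vecs_subset_vecs by blast
    fix v assume v: "v \<in> supp_vecs n T"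
    show "vadd v e \<in> supp_vecs n T" using v e_T by (rule vadd_in_supp_vecs)
    have "v \<in> vecs n" using v supp_vecs_subset_vecs by blast
    then show "f (vadd v e) u = f v u"
      using \<open>e \<in> vecs n\<close> fe lin u
      by (simp add: linear_seeded_vadd linear_seeded_in_vecs vadd_zero_vec)
  qed (use e in auto)
  then show ?thesis using card_supp_vecs[OF \<open>T \<subseteq> {..<n}\<close>] by simp
qed

lemma obtain_superset_with_card:
  assumes "S \<subseteq> A" "finite A" "card S \<le> t" "t \<le> card A"
  obtains T where "S \<subseteq> T" "T \<subseteq> A" "card T = t"
proof -
  have finite_S: "finite S" using assms(1,2) finite_subset by blast
  have "t - card S \<le> card (A - S)" using assms finite_S by (simp add: card_Diff_subset)
  then obtain R where "R \<subseteq> A - S" "card R = t - card S" "finite R"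
    by (rule obtain_subset_with_card_n)
  moreover have "card (S \<union> R) = card S + card R"
    using calculation finite_S by (intro card_Un_disjoint) auto
  ultimately show thesis
    using that[of "S \<union> R"] assms by auto
qed

theorem condenser_kernel_codes_tolerate_erasures:
  assumes "0 \<le> m" and m_le: "m \<le> real n"
    and lin: "linear_seeded n d r f" and cond: "strong_lossless_condenser n d r f m eps"
    and S: "S \<subseteq> {..<n}" and card_S: "real (card S) \<le> m"
  shows "real (card {u \<in> vecs d. \<not> kernel_tolerates n (kernel_code n r f u) S}) \<le> 4 * eps * 2 ^ d"
proof -
  define Bad where "Bad = {u \<in> vecs d. \<not> kernel_tolerates n (kernel_code n r f u) S}"
  define t where "t = nat \<lfloor>m\<rfloor>"
  have t: "real t \<le> m" "m < real t + 1" "card S \<le> t"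
    using \<open>0 \<le> m\<close> card_S by (auto simp: t_def le_nat_floor)
  then have "t \<le> card {..<n}" using m_le by simp
  obtain T where T: "S \<subseteq> T" "T \<subseteq> {..<n}" "card T = t"
    using obtain_superset_with_card[OF S _ t(3) \<open>t \<le> card {..<n}\<close>] by blast
  define V where "V = supp_vecs n T"
  define \<alpha> where "\<alpha> = 2 ^ t * 2 powr (- m)"
  have card_V: "real (card V) = 2 ^ t" using card_supp_vecs[OF T(2)] T(3) by (simp add: V_def)
  have \<alpha>_eq: "\<alpha> = 2 powr (real t - m)"
    by (simp add: \<alpha>_def powr_realpow[symmetric] powr_add[symmetric])
  have V: "V \<subseteq> vecs n" "V \<noteq> {}"
    unfolding V_def using supp_vecs_subset_vecs zero_vec_in_supp_vecs by blast+
  have "real (card V) \<le> 2 powr m"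
    using t(1) card_V by (simp add: powr_realpow[symmetric])
  then obtain X where X: "is_source n m X" and mass_V: "\<alpha> \<le> measure X V"
    using mixture_source_exists[OF V _ m_le] card_V by (auto simp: \<alpha>_def)
  obtain Z where Z: "set_pmf Z \<subseteq> vecs d \<times> vecs r" "min_entropy_ge Z (real d + m)"
    and dist: "stat_dist (seeded_out f d X) Z \<le> eps"
    using cond X unfolding strong_lossless_condenser_def by blast
  have c_eq: "2 ^ t / 2 * 2 powr - (real d + m) = \<alpha> / 2 / 2 ^ d"
  proof -
    have "(2::real) powr - (real d + m) = 2 powr (- m - real d)" by (simp add: algebra_simps)
    also have "\<dots> = 2 powr (- m) / 2 ^ d" by (simp add: powr_diff powr_realpow)
    finally show ?thesis by (simp add: \<alpha>_def)
  qed
  have "real (card Bad) * (measure X V / 2 ^ d - \<alpha> / 2 / 2 ^ d) \<le> stat_dist (seeded_out f d X) Z"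
    unfolding c_eq[symmetric]
  proof (rule stat_dist_seeded_out_ge[OF lin _ Z(1)])
    show "set_pmf X \<subseteq> vecs n" using X by (simp add: is_source_def)
    show "pmf Z z \<le> 2 powr - (real d + m)" for z
      using Z(2) unfolding min_entropy_ge_def by blast
    show "Bad \<subseteq> vecs d" by (simp add: Bad_def)
    show "V \<subseteq> vecs n" by (rule V(1))
    fix u assume "u \<in> Bad"
    then have "2 * card ((\<lambda>x. f x u) ` V) \<le> 2 ^ t"
      using double_card_image_supp_vecs_le_if_not_kernel_tolerates[OF lin _ T(1,2)] T(3)
      by (simp add: Bad_def V_def)
    then have "real (2 * card ((\<lambda>x. f x u) ` V)) \<le> 2 ^ t"
      by (metis of_nat_le_iff of_nat_numeral of_nat_power)
    then show "real (card ((\<lambda>x. f x u) ` V)) \<le> 2 ^ t / 2" by simp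
  qed
  also have "\<dots> \<le> eps" by (rule dist)
  finally have "real (card Bad) * ((measure X V - \<alpha> / 2) / 2 ^ d) \<le> eps"
    by (simp add: diff_divide_distrib)
  moreover have "1 / 2 \<le> \<alpha>"
    using powr_mono[of "-1" "real t - m" 2] t(2) by (simp add: \<alpha>_eq powr_minus)
  then have "1 / 4 / 2 ^ d \<le> (measure X V - \<alpha> / 2) / 2 ^ d"
    using mass_V by (intro divide_right_mono) auto
  ultimately have "real (card Bad) * (1 / 4 / 2 ^ d) \<le> eps"
    by (meson mult_left_mono of_nat_0_le_iff order_trans)
  then show ?thesis by (simp add: Bad_def field_simps)
qed

section \<open>Erasures in the codes generated by an extractor\<close>

definition gf2_dot :: "nat \<Rightarrow> bool list \<Rightarrow> bool list \<Rightarrow> bool" where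
  "gf2_dot k z y = odd (card {i. i < k \<and> z ! i \<and> y ! i})"

lemma odd_card_symmetric_difference:
  assumes "finite A" "finite B"
  shows "odd (card ((A - B) \<union> (B - A))) = (odd (card A) \<noteq> odd (card B))"
proof -
  have "card A = card (A \<inter> B) + card (A - B)" "card B = card (A \<inter> B) + card (B - A)"
    using card_Int_Diff[OF assms(1), of B] card_Int_Diff[OF assms(2), of A]
    by (simp_all add: Int_commute)
  moreover have "card ((A - B) \<union> (B - A)) = card (A - B) + card (B - A)"
    using assms by (intro card_Un_disjoint) auto
  ultimately show ?thesis by presburger
qed

lemma gf2_dot_vadd_left:
  assumes "length x = k" "length x' = k"
  shows "gf2_dot k (vadd x x') y = (gf2_dot k x y \<noteq> gf2_dot k x' y)"
proof -
  let ?A = "{i. i < k \<and> x ! i \<and> y ! i}" and ?B = "{i. i < k \<and> x' ! i \<and> y ! i}"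
  have "{i. i < k \<and> vadd x x' ! i \<and> y ! i} = (?A - ?B) \<union> (?B - ?A)"
    using assms by auto
  then show ?thesis unfolding gf2_dot_def using odd_card_symmetric_difference[of ?A ?B] by simp
qed

lemma gf2_dot_vadd_right:
  assumes "length y = k" "length y' = k"
  shows "gf2_dot k z (vadd y y') = (gf2_dot k z y \<noteq> gf2_dot k z y')"
proof -
  let ?A = "{i. i < k \<and> z ! i \<and> y ! i}" and ?B = "{i. i < k \<and> z ! i \<and> y' ! i}"
  have "{i. i < k \<and> z ! i \<and> vadd y y' ! i} = (?A - ?B) \<union> (?B - ?A)"
    using assms by auto
  then show ?thesis unfolding gf2_dot_def using odd_card_symmetric_difference[of ?A ?B] by simp
qed

lemma gf2_dot_zero_vec: "\<not> gf2_dot k z (zero_vec k)"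
proof -
  have none: "{i. i < k \<and> z ! i \<and> zero_vec k ! i} = {}" by (auto simp: zero_vec_def)
  show ?thesis unfolding gf2_dot_def none by simp
qed

lemma gf2_dot_unit_vec: "i < k \<Longrightarrow> gf2_dot k z (unit_vec k i) = z ! i"
proof -
  assume "i < k"
  then have "{j. j < k \<and> z ! j \<and> unit_vec k i ! j} = (if z ! i then {i} else {})"
    by (auto simp: unit_vec_def)
  then show ?thesis by (simp add: gf2_dot_def)
qed

lemma nth_encode: "j < n \<Longrightarrow> encode n k g u x ! j = gf2_dot k x (g (unit_vec n j) u)"
  by (simp add: encode_def gen_matrix_def gf2_dot_def)

lemma double_card_gf2_dot_orthogonal_le:
  assumes "i < k" "z ! i"
  shows "2 * card {y \<in> vecs k. \<not> gf2_dot k z y} \<le> 2 ^ k"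
proof -
  let ?e = "unit_vec k i"
  have flip: "gf2_dot k z (vadd y ?e) = (\<not> gf2_dot k z y)" if "y \<in> vecs k" for y
    using that assms gf2_dot_vadd_right[of y k ?e z] by (simp add: vecs_def gf2_dot_unit_vec)
  have "2 * card {y \<in> vecs k. \<not> gf2_dot k z y} \<le> card (vecs k)"
  proof (rule double_card_le_if_inj_into_complement)
    show "(\<lambda>y. vadd y ?e) ` {y \<in> vecs k. \<not> gf2_dot k z y} \<subseteq> {y \<in> vecs k. \<not> \<not> gf2_dot k z y}"
      using flip by auto
    show "inj_on (\<lambda>y. vadd y ?e) {y \<in> vecs k. \<not> gf2_dot k z y}"
      by (intro inj_onI) (metis (no_types, lifting) mem_Collect_eq unit_vec_in_vecs vadd_vadd_cancel)
  qed simp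
  then show ?thesis by (simp add: card_vecs)
qed

lemma gf2_dot_linear_image_supp_vecs_eq_False:
  assumes lin: "linear_seeded n d k g" and u: "u \<in> vecs d"
    and vanish: "\<And>j. j < n \<Longrightarrow> j \<notin> S \<Longrightarrow> \<not> gf2_dot k z (g (unit_vec n j) u)"
    and v: "v \<in> supp_vecs n ({..<n} - S)"
  shows "\<not> gf2_dot k z (g v u)"
proof -
  have "\<not> gf2_dot k z (g (indicator_vec n A) u)" if "finite A" "A \<subseteq> {..<n} - S" for A
    using that
  proof (induction A rule: finite_induct)
    case empty
    have "indicator_vec n {} = zero_vec n"
      by (simp add: indicator_vec_def zero_vec_def map_replicate_const)
    then show ?case using linear_seeded_zero_vec[OF lin u] by (simp add: gf2_dot_zero_vec)
  next
    case (insert j A)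
    let ?a = "indicator_vec n A" and ?e = "unit_vec n j"
    have a: "?a \<in> vecs n" by (simp add: indicator_vec_def vecs_def)
    have "indicator_vec n (insert j A) = vadd ?a ?e"
      using insert(2) by (intro nth_equalityI) (auto simp: indicator_vec_def unit_vec_def vadd_def)
    then have "g (indicator_vec n (insert j A)) u = vadd (g ?a u) (g ?e u)"
      using linear_seeded_vadd[OF lin u a unit_vec_in_vecs] by simp
    moreover have "length (g ?a u) = k" "length (g ?e u) = k"
      using linear_seeded_in_vecs[OF lin u] a unit_vec_in_vecs by (auto simp: vecs_def)
    moreover have "\<not> gf2_dot k z (g ?a u)" using insert.IH insert.prems by blast
    moreover have "\<not> gf2_dot k z (g ?e u)" using vanish insert.prems by blast
    ultimately show ?case by (simp add: gf2_dot_vadd_right)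
  qed
  moreover have "finite {i. i < n \<and> v ! i}" "{i. i < n \<and> v ! i} \<subseteq> {..<n} - S"
    using v by (auto simp: supp_vecs_def)
  moreover have "indicator_vec n {i. i < n \<and> v ! i} = v"
    using v supp_vecs_subset_vecs by (blast intro: indicator_vec_of_vec)
  ultimately show ?thesis by metis
qed

lemma double_card_image_supp_vecs_le_if_not_gen_tolerates:
  assumes lin: "linear_seeded n d k g" and u: "u \<in> vecs d"
    and bad: "\<not> gen_tolerates n k g u S"
  shows "2 * card ((\<lambda>x. g x u) ` supp_vecs n ({..<n} - S)) \<le> 2 ^ k"
proof -
  obtain x x' where x: "x \<in> vecs k" "x' \<in> vecs k" "x \<noteq> x'"
    and same: "restrict_outside n S (encode n k g u x) = restrict_outside n S (encode n k g u x')"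
    using bad unfolding gen_tolerates_def inj_on_def by blast
  define z where "z = vadd x x'"
  obtain i where i: "i < k" "z ! i"
    using nonzero_coordinate_vadd[OF x] unfolding z_def .
  have vanish: "\<not> gf2_dot k z (g (unit_vec n j) u)" if "j < n" "j \<notin> S" for j
  proof -
    have "j \<in> set (filter (\<lambda>j. j \<notin> S) [0..<n])" using that by simp
    then have "encode n k g u x ! j = encode n k g u x' ! j"
      using same unfolding restrict_outside_def map_eq_conv by blast
    then have "gf2_dot k x (g (unit_vec n j) u) = gf2_dot k x' (g (unit_vec n j) u)"
      using that(1) by (simp only: nth_encode)
    moreover have "length x = k" "length x' = k" using x by (simp_all add: vecs_def)
    ultimately show ?thesis unfolding z_def by (simp add: gf2_dot_vadd_left)
  qed
  have "(\<lambda>x. g x u) ` supp_vecs n ({..<n} - S) \<subseteq> {y \<in> vecs k. \<not> gf2_dot k z y}"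
  proof
    fix y assume "y \<in> (\<lambda>x. g x u) ` supp_vecs n ({..<n} - S)"
    then obtain v where v: "v \<in> supp_vecs n ({..<n} - S)" and y: "y = g v u" by blast
    have "y \<in> vecs k"
      using v y supp_vecs_subset_vecs linear_seeded_in_vecs[OF lin u] by blast
    moreover have "\<not> gf2_dot k z y"
      using gf2_dot_linear_image_supp_vecs_eq_False[OF lin u vanish v] y by simp
    ultimately show "y \<in> {y \<in> vecs k. \<not> gf2_dot k z y}" by simp
  qed
  then have "card ((\<lambda>x. g x u) ` supp_vecs n ({..<n} - S)) \<le> card {y \<in> vecs k. \<not> gf2_dot k z y}"
    by (intro card_mono) auto
  then show ?thesis using double_card_gf2_dot_orthogonal_le[OF i] by simp
qed

theorem extractor_codes_tolerate_erasures:
  assumes lin: "linear_seeded n d' k g" and ext: "strong_extractor n d' k g (real n - m) eps'"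
    and S: "S \<subseteq> {..<n}" and card_S: "real (card S) \<le> m"
  shows "real (card {u \<in> vecs d'. \<not> gen_tolerates n k g u S}) \<le> 2 * eps' * 2 ^ d'"
proof -
  define Bad where "Bad = {u \<in> vecs d'. \<not> gen_tolerates n k g u S}"
  define W where "W = supp_vecs n ({..<n} - S)"
  define U where "U = pmf_of_set (vecs d' \<times> vecs k)"
  have W: "W \<subseteq> vecs n" "W \<noteq> {}" "finite W"
    unfolding W_def using supp_vecs_subset_vecs zero_vec_in_supp_vecs finite_supp_vecs by blast+
  have "card S \<le> n" using card_mono[OF finite_lessThan S] by simp
  then have "2 powr (real n - m) \<le> 2 powr real (n - card S)"
    using card_S by (intro powr_mono) (auto simp: of_nat_diff)
  also have "\<dots> = real (card W)"
    using card_supp_vecs[of "{..<n} - S" n] finite_subset[OF S] S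
    by (simp add: W_def card_Diff_subset powr_realpow)
  finally have X: "is_source n (real n - m) (pmf_of_set W)"
    using W by (intro is_source_pmf_of_set) auto
  have "real (card Bad) * (measure (pmf_of_set W) W / 2 ^ d' - 2 ^ k / 2 * (1 / (2 ^ d' * 2 ^ k)))
      \<le> stat_dist (seeded_out g d' (pmf_of_set W)) U"
  proof (rule stat_dist_seeded_out_ge[OF lin])
    show "set_pmf (pmf_of_set W) \<subseteq> vecs n" using W by simp
    show "pmf U z \<le> 1 / (2 ^ d' * 2 ^ k)" for z
      by (simp add: U_def indicator_def card_cartesian_product card_vecs)
    show "set_pmf U \<subseteq> vecs d' \<times> vecs k" by (simp add: U_def)
    show "Bad \<subseteq> vecs d'" by (simp add: Bad_def)
    fix u assume "u \<in> Bad"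
    then have "2 * card ((\<lambda>x. g x u) ` W) \<le> 2 ^ k"
      using double_card_image_supp_vecs_le_if_not_gen_tolerates[OF lin] by (simp add: Bad_def W_def)
    then have "real (2 * card ((\<lambda>x. g x u) ` W)) \<le> 2 ^ k"
      by (metis of_nat_le_iff of_nat_numeral of_nat_power)
    then show "real (card ((\<lambda>x. g x u) ` W)) \<le> 2 ^ k / 2" by simp
  qed (use W in simp)
  also have "\<dots> \<le> eps'"
    using ext X by (simp add: strong_extractor_def U_def)
  finally have "real (card Bad) * (1 / 2 ^ d' - 1 / 2 / 2 ^ d') \<le> eps'"
    using W by (simp add: measure_pmf_of_set)
  then show ?thesis by (simp add: Bad_def field_simps)
qed

theorem mainTheorem16:
  fixes n d r d' k :: nat and m eps eps' :: real
    and f g :: "bool list \<Rightarrow> bool list \<Rightarrow> bool list" and S :: "nat set"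
  assumes "0 \<le> m" and "m \<le> real n"
    and "linear_seeded n d r f" and "strong_lossless_condenser n d r f m eps"
    and "linear_seeded n d' k g" and "strong_extractor n d' k g (real n - m) eps'"
    and "S \<subseteq> {0..<n}" and "real (card S) \<le> m"
  shows "real (card {u \<in> vecs d. \<not> kernel_tolerates n (kernel_code n r f u) S}) \<le> 5 * eps * 2 ^ d
       \<and> real (card {u \<in> vecs d'. \<not> gen_tolerates n k g u S}) \<le> 5 * eps' * 2 ^ d'"
proof
  have S: "S \<subseteq> {..<n}" using assms(7) by (simp add: atLeast0LessThan)
  have "real (card {u \<in> vecs d. \<not> kernel_tolerates n (kernel_code n r f u) S}) \<le> 4 * eps * 2 ^ d"
    using condenser_kernel_codes_tolerate_erasures[OF assms(1-4) S assms(8)] .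
  then show "real (card {u \<in> vecs d. \<not> kernel_tolerates n (kernel_code n r f u) S}) \<le> 5 * eps * 2 ^ d"
    using of_nat_0_le_iff by linarith
  have "real (card {u \<in> vecs d'. \<not> gen_tolerates n k g u S}) \<le> 2 * eps' * 2 ^ d'"
    using extractor_codes_tolerate_erasures[OF assms(5,6) S assms(8)] .
  then show "real (card {u \<in> vecs d'. \<not> gen_tolerates n k g u S}) \<le> 5 * eps' * 2 ^ d'"
    using of_nat_0_le_iff by linarith
qed

end
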